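(* Let $\mathcal G=(\mathcal V,\mathcal E,W)$ be a network, $h^-\le h^+$ in $\mathbb R^{\mathcal V}$ and $\mathcal H=\prod_i[h_i^-,h_i^+]$. The following are equivalent: (a) the coordination game on $\mathcal G$ is $\mathcal H$-robustly unpolarizable (for every $h\in\mathcal H$ it has no equilibrium outside $\{\pm\mathbf 1\}$); (b) $\mathcal G$ is $\mathcal H$-robustly indecomposable (i.e., $h$-indecomposable for every $h\in\mathcal H$); (c) $\mathcal G$ is $(h^-,h^+)$-indecomposable.
   Context: A network is $\mathcal G=(\mathcal V,\mathcal E,W)$ with finite node set $\mathcal V$, links $\mathcal E\subseteq\mathcal V\times\mathcal V$, weight matrix $W\in\mathbb R_+^{\mathcal V\times\mathcal V}$ with zero diagonal, $W_{ij}>0$ iff $(i,j)\in\mathcal E$; for $\mathcal S\subseteq\mathcal V$, $w_i^{\mathcal S}=\sum_{j\in\mathcal S}W_{ij}$. $\mathcal X=\{-1,+1\}^{\mathcal V}$. Indecomposability: for $h^-\le h^+$, $\mathcal G$ is $(h^-,h^+)$-indecomposable if for every partition $\mathcal V=\mathcal V^+\cup\mathcal V^-$ into two disjoint nonempty sets there exist a sign $s\in\{-,+\}$ and a node $i\in\mathcal V^s$ with $w_i^{\mathcal V^s}+s\,h_i^s<w_i^{\mathcal V^{-s}}$ (here $s\,h_i^s$ means $+h_i^+$ if $s=+$ and $-h_i^-$ if $s=-$, and $-s$ is the opposite sign). $\mathcal G$ is $h$-indecomposable if it is $(h,h)$-indecomposable. Coordination game with external field $h$: players $\mathcal V$, actions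 $\{\pm1\}$, utilities $u_i(x)=x_i(\sum_jW_{ij}x_j+h_i)$; $x^*$ is an equilibrium if for every $i$, $x_i^*$ maximizes $u_i(\cdot,x^*_{-i})$ over $\{\pm1\}$. *)

theory Defs
  imports Complex_Main "HOL-Library.FuncSet"
begin

text \<open>A network on the finite node set V is given by a weight function
  W :: 'v => 'v => real, nonnegative, with zero diagonal; links are the pairs
  with positive weight.  Only the values of W on V x V matter.\<close>

definition network :: "'v set \<Rightarrow> ('v \<Rightarrow> 'v \<Rightarrow> real) \<Rightarrow> bool" where
  "network V W \<longleftrightarrow> finite V \<and> (\<forall>i\<in>V. \<forall>j\<in>V. W i j \<ge> 0) \<and> (\<forall>i\<in>V. W i i = 0)"

definition wdeg :: "('v \<Rightarrow> 'v \<Rightarrow> real) \<Rightarrow> 'v \<Rightarrow> 'v set \<Rightarrow> real" where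
  "wdeg W i S = (\<Sum>j\<in>S. W i j)"

definition indecomposable2 ::
  "'v set \<Rightarrow> ('v \<Rightarrow> 'v \<Rightarrow> real) \<Rightarrow> ('v \<Rightarrow> real) \<Rightarrow> ('v \<Rightarrow> real) \<Rightarrow> bool" where
  "indecomposable2 V W hm hp \<longleftrightarrow>
     (\<forall>Vp Vm. Vp \<union> Vm = V \<and> Vp \<inter> Vm = {} \<and> Vp \<noteq> {} \<and> Vm \<noteq> {} \<longrightarrow>
        (\<exists>i\<in>Vp. wdeg W i Vp + hp i < wdeg W i Vm) \<or>
        (\<exists>i\<in>Vm. wdeg W i Vm - hm i < wdeg W i Vp))"

definition indecomposable ::
  "'v set \<Rightarrow> ('v \<Rightarrow> 'v \<Rightarrow> real) \<Rightarrow> ('v \<Rightarrow> real) \<Rightarrow> bool" where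
  "indecomposable V W h \<longleftrightarrow> indecomposable2 V W h h"

definition configs :: "'v set \<Rightarrow> ('v \<Rightarrow> real) set" where
  "configs V = V \<rightarrow>\<^sub>E {-1, 1}"

definition utility ::
  "'v set \<Rightarrow> ('v \<Rightarrow> 'v \<Rightarrow> real) \<Rightarrow> ('v \<Rightarrow> real) \<Rightarrow> 'v \<Rightarrow> ('v \<Rightarrow> real) \<Rightarrow> real" where
  "utility V W h i x = x i * ((\<Sum>j\<in>V. W i j * x j) + h i)"

definition equilibrium ::
  "'v set \<Rightarrow> ('v \<Rightarrow> 'v \<Rightarrow> real) \<Rightarrow> ('v \<Rightarrow> real) \<Rightarrow> ('v \<Rightarrow> real) \<Rightarrow> bool" where
  "equilibrium V W h x \<longleftrightarrow> x \<in> configs V \<and>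
     (\<forall>i\<in>V. \<forall>y\<in>{-1, 1}. utility V W h i (x(i := y)) \<le> utility V W h i x)"

definition consensus :: "'v set \<Rightarrow> ('v \<Rightarrow> real) set" where
  "consensus V = {(\<lambda>i. if i \<in> V then 1 else undefined), (\<lambda>i. if i \<in> V then -1 else undefined)}"

definition box :: "'v set \<Rightarrow> ('v \<Rightarrow> real) \<Rightarrow> ('v \<Rightarrow> real) \<Rightarrow> ('v \<Rightarrow> real) set" where
  "box V hm hp = {h. \<forall>i\<in>V. hm i \<le> h i \<and> h i \<le> hp i}"

definition robustly_unpolarizable ::
  "'v set \<Rightarrow> ('v \<Rightarrow> 'v \<Rightarrow> real) \<Rightarrow> ('v \<Rightarrow> real) set \<Rightarrow> bool" where
  "robustly_unpolarizable V W H \<longleftrightarrow>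
     (\<forall>h\<in>H. \<forall>x. equilibrium V W h x \<longrightarrow> x \<in> consensus V)"

definition robustly_indecomposable ::
  "'v set \<Rightarrow> ('v \<Rightarrow> 'v \<Rightarrow> real) \<Rightarrow> ('v \<Rightarrow> real) set \<Rightarrow> bool" where
  "robustly_indecomposable V W H \<longleftrightarrow> (\<forall>h\<in>H. indecomposable V W h)"

end

theory Submission
  imports Defs
begin

text \<open>A configuration x splits V into the nodes playing +1 and those playing -1, and x is an
  equilibrium exactly when no node of either side gains by switching, i.e. when the
  partition is stable. Non-consensus configurations correspond to
  partitions into two nonempty sides, so unpolarizability is indecomposability for each
  fixed field h. For the robust version, stability only gets easier when the field on the
  +1 side increases and the field on the -1 side decreases; hence a partition is stable
  for some h in the box iff it is stable for the extreme field equal to hp on the +1 side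
  and hm on the -1 side, which is the (hm, hp) condition.\<close>

definition proper_bipartition :: "'v set \<Rightarrow> 'v set \<Rightarrow> 'v set \<Rightarrow> bool" where
  "proper_bipartition V Vp Vm \<longleftrightarrow> Vp \<union> Vm = V \<and> Vp \<inter> Vm = {} \<and> Vp \<noteq> {} \<and> Vm \<noteq> {}"

definition stable_partition ::
  "('v \<Rightarrow> 'v \<Rightarrow> real) \<Rightarrow> ('v \<Rightarrow> real) \<Rightarrow> ('v \<Rightarrow> real) \<Rightarrow> 'v set \<Rightarrow> 'v set \<Rightarrow> bool" where
  "stable_partition W hm hp Vp Vm \<longleftrightarrow>
     (\<forall>i\<in>Vp. wdeg W i Vm \<le> wdeg W i Vp + hp i) \<and> (\<forall>i\<in>Vm. wdeg W i Vp \<le> wdeg W i Vm - hm i)"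

lemma indecomposable2_iff_no_stable_partition:
  "indecomposable2 V W hm hp \<longleftrightarrow>
     \<not> (\<exists>Vp Vm. proper_bipartition V Vp Vm \<and> stable_partition W hm hp Vp Vm)"
  unfolding indecomposable2_def proper_bipartition_def stable_partition_def
  by (auto simp: not_le)

abbreviation plus_side :: "'v set \<Rightarrow> ('v \<Rightarrow> real) \<Rightarrow> 'v set" where
  "plus_side V x \<equiv> {i\<in>V. x i = 1}"

abbreviation minus_side :: "'v set \<Rightarrow> ('v \<Rightarrow> real) \<Rightarrow> 'v set" where
  "minus_side V x \<equiv> {i\<in>V. x i = -1}"

lemma configs_values:
  assumes "x \<in> configs V" "i \<in> V"
  shows "x i = 1 \<or> x i = -1"
  using assms by (auto simp: configs_def)

lemma configs_sides_partition:
  assumes "x \<in> configs V"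
  shows "plus_side V x \<union> minus_side V x = V" "plus_side V x \<inter> minus_side V x = {}"
  using assms by (auto simp: configs_def)

lemma not_consensus_iff_proper_bipartition:
  assumes "x \<in> configs V"
  shows "x \<notin> consensus V \<longleftrightarrow> proper_bipartition V (plus_side V x) (minus_side V x)"
proof -
  have ext: "x i = undefined" if "i \<notin> V" for i
    using assms that by (auto simp: configs_def)
  have "x \<in> consensus V \<longleftrightarrow> (\<forall>i\<in>V. x i = 1) \<or> (\<forall>i\<in>V. x i = -1)"
    unfolding consensus_def using ext by (auto simp: fun_eq_iff)
  also have "\<dots> \<longleftrightarrow> plus_side V x = {} \<or> minus_side V x = {}"
    using configs_values[OF assms] by fastforce
  finally show ?thesis
    using configs_sides_partition[OF assms] unfolding proper_bipartition_def by blast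
qed

lemma config_of_bipartition:
  assumes "Vp \<union> Vm = V" "Vp \<inter> Vm = {}"
  obtains x where "x \<in> configs V" "plus_side V x = Vp" "minus_side V x = Vm"
proof
  let ?x = "\<lambda>i. if i \<in> V then (if i \<in> Vp then 1 else -1) else undefined :: real"
  show "?x \<in> configs V" by (auto simp: configs_def split: if_split_asm)
  show "plus_side V ?x = Vp" "minus_side V ?x = Vm"
    using assms by (auto split: if_split_asm)
qed

lemma sum_weighted_config:
  assumes "finite V" "x \<in> configs V"
  shows "(\<Sum>j\<in>V. W i j * x j) = wdeg W i (plus_side V x) - wdeg W i (minus_side V x)"
proof -
  note sides = configs_sides_partition[OF assms(2)]
  have "(\<Sum>j\<in>V. W i j * x j) =
      (\<Sum>j\<in>plus_side V x. W i j * x j) + (\<Sum>j\<in>minus_side V x. W i j * x j)"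
    using sides assms(1) by (metis (no_types, lifting) finite_Un sum.union_disjoint)
  then show ?thesis
    by (simp add: wdeg_def sum_negf)
qed

lemma utility_fun_upd:
  assumes "W i i = 0"
  shows "utility V W h i (x(i := y)) = y * ((\<Sum>j\<in>V. W i j * x j) + h i)"
proof -
  have "(\<Sum>j\<in>V. W i j * (x(i := y)) j) = (\<Sum>j\<in>V. W i j * x j)"
    using assms by (intro sum.cong) auto
  then show ?thesis by (simp add: utility_def)
qed

lemma equilibrium_iff_stable_partition:
  assumes net: "network V W" and x: "x \<in> configs V"
  shows "equilibrium V W h x \<longleftrightarrow> stable_partition W h h (plus_side V x) (minus_side V x)"
proof -
  define s where "s i = (\<Sum>j\<in>V. W i j * x j) + h i" for i
  note xi = configs_values[OF x]
  have best_response: "(\<forall>y\<in>{-1, 1}. utility V W h i (x(i := y)) \<le> utility V W h i x)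
      \<longleftrightarrow> 0 \<le> x i * s i" if "i \<in> V" for i
  proof -
    have "W i i = 0" using net that by (simp add: network_def)
    then have upd: "utility V W h i (x(i := y)) = y * s i" for y
      by (simp add: utility_fun_upd s_def)
    have "utility V W h i x = x i * s i"
      using upd[of "x i"] by simp
    then show ?thesis using xi[OF that] upd by auto
  qed
  have s: "s i = wdeg W i (plus_side V x) - wdeg W i (minus_side V x) + h i" for i
    using sum_weighted_config[OF _ x] net by (simp add: s_def network_def)
  have "equilibrium V W h x \<longleftrightarrow> (\<forall>i\<in>V. 0 \<le> x i * s i)"
    using x best_response by (simp add: equilibrium_def)
  also have "\<dots> \<longleftrightarrow> stable_partition W h h (plus_side V x) (minus_side V x)"
  proof -
    have "0 \<le> x i * s i \<longleftrightarrow>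
        (x i = 1 \<longrightarrow> wdeg W i (minus_side V x) \<le> wdeg W i (plus_side V x) + h i) \<and>
        (x i = -1 \<longrightarrow> wdeg W i (plus_side V x) \<le> wdeg W i (minus_side V x) - h i)"
      if "i \<in> V" for i
      using xi[OF that] unfolding s by auto
    then show ?thesis
      unfolding stable_partition_def by auto
  qed
  finally show ?thesis .
qed

lemma unpolarizable_iff_indecomposable:
  assumes "network V W"
  shows "(\<forall>x. equilibrium V W h x \<longrightarrow> x \<in> consensus V) \<longleftrightarrow> indecomposable V W h"
proof -
  have "(\<exists>x. equilibrium V W h x \<and> x \<notin> consensus V) \<longleftrightarrow>
      (\<exists>x\<in>configs V. proper_bipartition V (plus_side V x) (minus_side V x)
         \<and> stable_partition W h h (plus_side V x) (minus_side V x))"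
    using equilibrium_iff_stable_partition[OF assms] not_consensus_iff_proper_bipartition
      equilibrium_def by blast
  also have "\<dots> \<longleftrightarrow> (\<exists>Vp Vm. proper_bipartition V Vp Vm \<and> stable_partition W h h Vp Vm)"
  proof
    assume "\<exists>Vp Vm. proper_bipartition V Vp Vm \<and> stable_partition W h h Vp Vm"
    then obtain Vp Vm where "proper_bipartition V Vp Vm" "stable_partition W h h Vp Vm"
      by blast
    moreover obtain x where "x \<in> configs V" "plus_side V x = Vp" "minus_side V x = Vm"
      using config_of_bipartition \<open>proper_bipartition V Vp Vm\<close>
      unfolding proper_bipartition_def by blast
    ultimately show "\<exists>x\<in>configs V. proper_bipartition V (plus_side V x) (minus_side V x)
         \<and> stable_partition W h h (plus_side V x) (minus_side V x)"
      by auto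
  qed blast
  finally show ?thesis
    by (auto simp: indecomposable_def indecomposable2_iff_no_stable_partition)
qed

lemma stable_partition_mono:
  assumes "\<forall>i\<in>Vp. hp i \<le> hp' i" "\<forall>i\<in>Vm. hm' i \<le> hm i"
    and "stable_partition W hm hp Vp Vm"
  shows "stable_partition W hm' hp' Vp Vm"
  using assms unfolding stable_partition_def by (smt (verit, best))

lemma stable_partition_for_some_field_in_box:
  assumes "Vp \<union> Vm = V" "Vp \<inter> Vm = {}" "\<forall>i\<in>V. hm i \<le> hp i"
  shows "(\<exists>h\<in>box V hm hp. stable_partition W h h Vp Vm) \<longleftrightarrow> stable_partition W hm hp Vp Vm"
proof
  assume "\<exists>h\<in>box V hm hp. stable_partition W h h Vp Vm"
  then show "stable_partition W hm hp Vp Vm"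
    using assms(1) by (auto simp: box_def elim!: stable_partition_mono[rotated 2])
next
  assume stable: "stable_partition W hm hp Vp Vm"
  let ?h = "\<lambda>i. if i \<in> Vp then hp i else hm i"
  have "?h \<in> box V hm hp" using assms by (auto simp: box_def)
  moreover have "stable_partition W ?h ?h Vp Vm"
    using assms(2) by (intro stable_partition_mono[OF _ _ stable]) auto
  ultimately show "\<exists>h\<in>box V hm hp. stable_partition W h h Vp Vm" by blast
qed

theorem theorem3:
  fixes V :: "'v set" and W :: "'v \<Rightarrow> 'v \<Rightarrow> real" and hm hp :: "'v \<Rightarrow> real"
  assumes "network V W"
    and "\<forall>i\<in>V. hm i \<le> hp i"
  shows "(robustly_unpolarizable V W (box V hm hp) \<longleftrightarrow> robustly_indecomposable V W (box V hm hp))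
       \<and> (robustly_indecomposable V W (box V hm hp) \<longleftrightarrow> indecomposable2 V W hm hp)"
proof
  show "robustly_unpolarizable V W (box V hm hp) \<longleftrightarrow> robustly_indecomposable V W (box V hm hp)"
    unfolding robustly_unpolarizable_def robustly_indecomposable_def
    using unpolarizable_iff_indecomposable[OF assms(1)] by simp
  have "\<not> robustly_indecomposable V W (box V hm hp) \<longleftrightarrow>
      (\<exists>Vp Vm. proper_bipartition V Vp Vm \<and> (\<exists>h\<in>box V hm hp. stable_partition W h h Vp Vm))"
    unfolding robustly_indecomposable_def indecomposable_def indecomposable2_iff_no_stable_partition
    by blast
  also have "\<dots> \<longleftrightarrow> (\<exists>Vp Vm. proper_bipartition V Vp Vm \<and> stable_partition W hm hp Vp Vm)"
    by (intro ex_cong1 conj_cong refl)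
      (simp add: proper_bipartition_def stable_partition_for_some_field_in_box assms(2))
  finally show "robustly_indecomposable V W (box V hm hp) \<longleftrightarrow> indecomposable2 V W hm hp"
    unfolding indecomposable2_iff_no_stable_partition by blast
qed

end
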